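(* Let $X$ be a Banach space with a Schauder basis $(e_i)_i$. For every $T\in\mathbb{R} I\oplus\mathcal{K}_\mathrm{diag}(X)$ and $i\in\mathbb{N}$ set $\lambda_{T,i}=e_i^*(Te_i)$; the limit $\lambda_{T,\omega}=\lim_i\lambda_{T,i}$ exists. For every closed subset $L$ of $[1,\omega]$ define $\mathcal{A}_L=\{T\in\mathbb{R} I\oplus\mathcal{K}_\mathrm{diag}(X):\lambda_{T,\kappa}=0\text{ for all }\kappa\in L\}$. Then the closed ideals of $\mathbb{R} I\oplus\mathcal{K}_\mathrm{diag}(X)$ are precisely the spaces $\mathcal{A}_L$, $L$ ranging over the closed subsets of $[1,\omega]$.
   Context: $(e_i^* )_i$ are the biorthogonal functionals. $T\in\mathcal{L}(X)$ is diagonal if $e_j^*(Te_i)=0$ for $i\ne j$; $\mathcal{K}_\mathrm{diag}(X)$ is the space of compact diagonal operators, and $\mathbb{R} I\oplus\mathcal{K}_\mathrm{diag}(X)$ is the unital Banach algebra (composition, operator norm) of operators $\lambda I+K$, $\lambda\in\mathbb{R}$, $K\in\mathcal{K}_\mathrm{diag}(X)$. $[1,\omega]=\{1,2,3,\dots\}\cup\{\omega\}$ carries the order topology (the one-point compactification of $\mathbb{N}$). *)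

theory Defs
  imports "HOL-Analysis.Analysis"
begin

definition schauder_basis :: "(nat \<Rightarrow> 'a::banach) \<Rightarrow> bool" where
  "schauder_basis e \<longleftrightarrow> (\<forall>x. \<exists>!a::nat \<Rightarrow> real. (\<lambda>n. a n *\<^sub>R e n) sums x)"

definition coord :: "(nat \<Rightarrow> 'a::banach) \<Rightarrow> nat \<Rightarrow> 'a \<Rightarrow> real" where
  "coord e i x = (THE a::nat \<Rightarrow> real. (\<lambda>n. a n *\<^sub>R e n) sums x) i"

definition diagonal_op :: "(nat \<Rightarrow> 'a::banach) \<Rightarrow> ('a \<Rightarrow>\<^sub>L 'a) \<Rightarrow> bool" where
  "diagonal_op e T \<longleftrightarrow> (\<forall>i j. i \<noteq> j \<longrightarrow> coord e j (blinfun_apply T (e i)) = 0)"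

definition compact_op :: "('a::banach \<Rightarrow>\<^sub>L 'a) \<Rightarrow> bool" where
  "compact_op K \<longleftrightarrow> compact (closure (blinfun_apply K ` ball 0 1))"

definition diag_alg :: "(nat \<Rightarrow> 'a::banach) \<Rightarrow> ('a \<Rightarrow>\<^sub>L 'a) set" where
  "diag_alg e = {c *\<^sub>R id_blinfun + K | c K. compact_op K \<and> diagonal_op e K}"

definition lam :: "(nat \<Rightarrow> 'a::banach) \<Rightarrow> ('a \<Rightarrow>\<^sub>L 'a) \<Rightarrow> nat \<Rightarrow> real" where
  "lam e T i = coord e i (blinfun_apply T (e i))"

text \<open>lambda_{T,kappa} for kappa in [0,omega] (= enat, carrying its order topology);
  at infinity it is the limit of the diagonal entries.\<close>
definition lam_ext :: "(nat \<Rightarrow> 'a::banach) \<Rightarrow> ('a \<Rightarrow>\<^sub>L 'a) \<Rightarrow> enat \<Rightarrow> real" where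
  "lam_ext e T k = (case k of enat i \<Rightarrow> lam e T i | \<infinity> \<Rightarrow> lim (lam e T))"

definition A_L :: "(nat \<Rightarrow> 'a::banach) \<Rightarrow> enat set \<Rightarrow> ('a \<Rightarrow>\<^sub>L 'a) set" where
  "A_L e L = {T \<in> diag_alg e. \<forall>k\<in>L. lam_ext e T k = 0}"

definition closed_ideal_of :: "('a::banach \<Rightarrow>\<^sub>L 'a) set \<Rightarrow> ('a \<Rightarrow>\<^sub>L 'a) set \<Rightarrow> bool" where
  "closed_ideal_of A J \<longleftrightarrow> J \<subseteq> A \<and> subspace J \<and> closed J \<and>
     (\<forall>S\<in>A. \<forall>T\<in>J. S o\<^sub>L T \<in> J \<and> T o\<^sub>L S \<in> J)"

end

theory Submission
  imports Defs
begin

text \<open>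
  An operator \<open>T = c I + K\<close> of the algebra has diagonal entries \<open>c + \<lambda>\<^sub>i(K)\<close>, and the
  entries of a compact diagonal \<open>K\<close> tend to \<open>0\<close>, since \<open>K\<close> maps the normalised basis vectors
  into a compact set while their images converge to \<open>0\<close> coordinatewise; hence \<open>\<lambda>\<^sub>\<omega>(T) = c\<close>.
  Every \<open>T \<mapsto> \<lambda>\<^sub>\<kappa>(T)\<close> is a multiplicative linear functional, Lipschitz because the basis
  projections \<open>P\<^sub>n\<close> are uniformly bounded (the open mapping theorem, applied to the complete
  norm \<open>sup\<^sub>n \<parallel>P\<^sub>n x\<parallel>\<close>), so each \<open>A_L\<close> is a closed ideal.

  Conversely, let \<open>L\<close> be the common zero set of a closed ideal \<open>J\<close>; it is closed because
  \<open>\<lambda>\<^sub>i(T) \<longrightarrow> \<lambda>\<^sub>\<omega>(T)\<close>. If \<open>\<lambda>\<^sub>i(T) \<noteq> 0\<close> for some \<open>T \<in> J\<close>, then \<open>J\<close> contains the coordinate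
  projection \<open>Q\<^sub>i = \<lambda>\<^sub>i(T)\<inverse> Q\<^sub>i T\<close>. A compact diagonal \<open>K\<close> vanishing on \<open>L\<close> is the norm limit of
  \<open>P\<^sub>n K = \<Sum>\<^sub>i\<^sub><\<^sub>n \<lambda>\<^sub>i(K) Q\<^sub>i \<in> J\<close>, and a general element of \<open>A_L\<close> is reduced to this case by
  subtracting a multiple of an element of \<open>J\<close> with \<open>\<lambda>\<^sub>\<omega> \<noteq> 0\<close>.
\<close>

section \<open>A complete norm dominating a Banach norm is equivalent to it\<close>

lemma Baire_sublevel_closure_ball:
  fixes f :: "'a::banach \<Rightarrow> real"
  obtains k :: nat and x0 r where "r > 0" "ball x0 r \<subseteq> closure {x. f x \<le> k}"
proof -
  define F where "F k = closure {x. f x \<le> real k}" for k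
  have "\<exists>k. euclidean interior_of F k \<noteq> {}"
  proof (rule ccontr)
    assume "\<nexists>k. euclidean interior_of F k \<noteq> {}"
    then have "euclidean interior_of \<Union>(range F) = {}"
      by (intro Baire_category_alt) (auto simp: completely_metrizable_space_euclidean F_def)
    moreover have "x \<in> F (nat \<lceil>f x\<rceil>)" for x
      unfolding F_def by (rule closure_subset[THEN subsetD]) (simp add: real_nat_ceiling_ge)
    then have "\<Union>(range F) = UNIV" by blast
    ultimately show False by simp
  qed
  then obtain k x0 where "x0 \<in> interior (F k)" by auto
  then obtain r where "r > 0" "ball x0 r \<subseteq> F k" using mem_interior by blast
  then show ?thesis using that unfolding F_def by blast
qed

locale complete_dominating_norm =
  fixes N :: "'a::banach \<Rightarrow> real"
  assumes N_add: "N (x + y) \<le> N x + N y"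
    and N_scaleR: "N (c *\<^sub>R x) = \<bar>c\<bar> * N x"
    and norm_le_N: "norm x \<le> N x"
    and N_complete: "(\<And>\<epsilon>. \<epsilon> > 0 \<Longrightarrow> \<exists>M. \<forall>m\<ge>M. \<forall>n\<ge>M. N (s m - s n) < \<epsilon>) \<Longrightarrow>
      \<exists>l. (\<lambda>n. N (s n - l)) \<longlonglongrightarrow> 0"
begin

lemma N_zero [simp]: "N 0 = 0"
  using N_scaleR[of 0 0] by simp

lemma N_minus_commute: "N (x - y) = N (y - x)"
  using N_scaleR[of "-1" "x - y"] by simp

lemma N_diff: "N (x - y) \<le> N x + N y"
  using N_add[of x "- y"] N_scaleR[of "-1" y] by simp

lemma sublevel_approximates_near_0:
  obtains k :: nat and r where "r > 0"
    "\<forall>y \<epsilon>. norm y < r \<longrightarrow> \<epsilon> > 0 \<longrightarrow> (\<exists>z. N z \<le> 2 * k \<and> norm (y - z) < \<epsilon>)"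
proof -
  obtain k :: nat and x0 r where r: "r > 0" and B: "ball x0 r \<subseteq> closure {x. N x \<le> k}"
    by (rule Baire_sublevel_closure_ball)
  have approach: "\<exists>a. N a \<le> k \<and> dist a x < \<delta>" if "x \<in> ball x0 r" "\<delta> > 0" for x \<delta>
  proof -
    have "x \<in> closure {x. N x \<le> k}" using B that(1) by blast
    then show ?thesis using that(2) unfolding closure_approachable by blast
  qed
  have "\<exists>z. N z \<le> 2 * k \<and> norm (y - z) < \<epsilon>" if y: "norm y < r" and \<epsilon>: "\<epsilon> > 0" for y \<epsilon>
  proof -
    have "x0 + y \<in> ball x0 r" "x0 \<in> ball x0 r" using r y by (simp_all add: dist_norm)
    then obtain a b where a: "N a \<le> k" "dist a (x0 + y) < \<epsilon> / 2" and b: "N b \<le> k" "dist b x0 < \<epsilon> / 2"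
      using approach half_gt_zero[OF \<epsilon>] by metis
    have "norm (y - (a - b)) = norm ((x0 + y - a) + (b - x0))" by (simp add: algebra_simps)
    also have "\<dots> \<le> norm (x0 + y - a) + norm (b - x0)" by (rule norm_triangle_ineq)
    also have "\<dots> = dist a (x0 + y) + dist b x0" by (simp add: dist_norm norm_minus_commute)
    finally have "norm (y - (a - b)) \<le> dist a (x0 + y) + dist b x0" .
    moreover have "N (a - b) \<le> 2 * k" using N_diff[of a b] a b by linarith
    ultimately show ?thesis using a b by (intro exI[of _ "a - b"]) linarith
  qed
  with r show ?thesis using that by blast
qed

lemma approx_by_N_bounded:
  obtains M where "M \<ge> 0" "\<And>y \<epsilon>. \<epsilon> > 0 \<Longrightarrow> \<exists>z. N z \<le> M * norm y \<and> norm (y - z) < \<epsilon>"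
proof -
  obtain k :: nat and r where r: "r > 0"
    and near: "\<forall>y \<epsilon>. norm y < r \<longrightarrow> \<epsilon> > 0 \<longrightarrow> (\<exists>z. N z \<le> 2 * k \<and> norm (y - z) < \<epsilon>)"
    by (rule sublevel_approximates_near_0)
  have "\<exists>z. N z \<le> 4 * k / r * norm y \<and> norm (y - z) < \<epsilon>" if \<epsilon>: "\<epsilon> > 0" for y \<epsilon>
  proof (cases "y = 0")
    case True
    then show ?thesis using \<epsilon> by (intro exI[of _ 0]) simp
  next
    case False
    define c where "c = r / (2 * norm y)"
    have c: "c > 0" "norm (c *\<^sub>R y) < r" using False r by (simp_all add: c_def)
    obtain z where z: "N z \<le> 2 * k" "norm (c *\<^sub>R y - z) < \<epsilon> * c"
      using near c \<epsilon> by (meson mult_pos_pos)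
    have "N (z /\<^sub>R c) = N z / c" using c(1) by (simp add: N_scaleR divide_inverse_commute)
    also have "\<dots> \<le> 2 * k / c" using z(1) c(1) by (simp add: divide_right_mono)
    also have "\<dots> = 4 * k / r * norm y" using False r by (simp add: c_def)
    finally have "N (z /\<^sub>R c) \<le> 4 * k / r * norm y" .
    moreover have "y - z /\<^sub>R c = (c *\<^sub>R y - z) /\<^sub>R c" using c(1) by (simp add: algebra_simps)
    then have "norm (y - z /\<^sub>R c) = norm (c *\<^sub>R y - z) / c" using c(1) by (simp add: divide_inverse_commute)
    then have "norm (y - z /\<^sub>R c) < \<epsilon>" using z(2) c(1) by (simp add: divide_less_eq)
    ultimately show ?thesis by blast
  qed
  then show ?thesis using r by (intro that[of "4 * k / r"]) simp_all
qed

lemma N_telescope: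
  assumes step: "\<And>j. N (h j - h (Suc j)) \<le> b * (1/2) ^ j" and "m \<le> n"
  shows "N (h m - h n) \<le> 2 * b * ((1/2) ^ m - (1/2) ^ n)"
  using \<open>m \<le> n\<close>
proof (induction n rule: dec_induct)
  case (step n)
  have "N (h m - h (Suc n)) \<le> N (h m - h n) + N (h n - h (Suc n))"
    using N_add[of "h m - h n" "h n - h (Suc n)"] by simp
  also have "\<dots> \<le> 2 * b * ((1/2) ^ m - (1/2) ^ Suc n)"
    using step.IH assms(1)[of n] by (simp add: algebra_simps)
  finally show ?case .
qed simp

text \<open>A norm-null sequence with geometrically decreasing \<open>N\<close>-increments is \<open>N\<close>-Cauchy; its
  \<open>N\<close>-limit is its norm limit \<open>0\<close>, so \<open>N (h 0)\<close> is bounded by the sum of the increments.\<close>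
lemma N_le_of_geometric_increments:
  assumes "b \<ge> 0" and step: "\<And>j. N (h j - h (Suc j)) \<le> b * (1/2) ^ j" and "h \<longlonglongrightarrow> 0"
  shows "N (h 0) \<le> 2 * b"
proof -
  have bound: "N (h m - h n) \<le> 2 * b * (1/2) ^ min m n" for m n
  proof -
    have mono: "N (h m - h n) \<le> 2 * b * (1/2) ^ m" if "m \<le> n" for m n
      using N_telescope[OF step that] mult_left_mono[of "(1/2)^m - (1/2)^n" "(1/2)^m" "2 * b"] \<open>b \<ge> 0\<close>
      by simp
    show ?thesis
      using mono[of m n] mono[of n m] N_minus_commute[of "h m" "h n"] by (cases "m \<le> n") (auto simp: min_def)
  qed
  have geometric: "(\<lambda>j. 2 * b * (1/2::real) ^ j) \<longlonglongrightarrow> 0"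
    by (intro tendsto_mult_right_zero LIMSEQ_realpow_zero) auto
  have "\<exists>K. \<forall>m\<ge>K. \<forall>n\<ge>K. N (h m - h n) < \<epsilon>" if \<epsilon>: "\<epsilon> > 0" for \<epsilon>
  proof -
    obtain K where K: "\<And>j. j \<ge> K \<Longrightarrow> 2 * b * (1/2) ^ j < \<epsilon>"
      using order_tendstoD(2)[OF geometric \<epsilon>] unfolding eventually_sequentially by blast
    show ?thesis using bound K by (meson min.boundedI order_le_less_trans)
  qed
  then obtain l where l: "(\<lambda>n. N (h n - l)) \<longlonglongrightarrow> 0" using N_complete by blast
  have "(\<lambda>n. h n - l) \<longlonglongrightarrow> 0"
    using l by (rule Lim_null_comparison[OF always_eventually, rotated]) (rule allI norm_le_N)+
  then have "h \<longlonglongrightarrow> l" by (rule LIM_zero_cancel)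
  then have "l = 0" using \<open>h \<longlonglongrightarrow> 0\<close> by (rule LIMSEQ_unique)
  with l have lim: "(\<lambda>n. 2 * b + N (h n)) \<longlonglongrightarrow> 2 * b + 0"
    by (intro tendsto_add tendsto_const) simp
  have "N (h 0) \<le> 2 * b + N (h n)" for n
    using N_add[of "h 0 - h n" "h n"] bound[of 0 n] by simp
  then have "N (h 0) \<le> 2 * b + 0" by (intro LIMSEQ_le_const[OF lim]) blast
  then show ?thesis by simp
qed

lemma N_le_norm_of_approx:
  assumes "M \<ge> 0" and dense: "\<And>y \<epsilon>. \<epsilon> > 0 \<Longrightarrow> \<exists>z. N z \<le> M * norm y \<and> norm (y - z) < \<epsilon>"
  shows "N y \<le> 2 * M * norm y"
proof (cases "y = 0")
  case False
  define f where "f y \<epsilon> = (SOME z. N z \<le> M * norm y \<and> norm (y - z) < \<epsilon>)" for y \<epsilon>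
  have f: "N (f y \<epsilon>) \<le> M * norm y \<and> norm (y - f y \<epsilon>) < \<epsilon>" if "\<epsilon> > 0" for y \<epsilon>
    unfolding f_def using dense[OF that] by (rule someI_ex)
  define h where "h = rec_nat y (\<lambda>j v. v - f v (norm y * (1/2) ^ Suc j))"
  have h_Suc: "h (Suc j) = h j - f (h j) (norm y * (1/2) ^ Suc j)" for j
    by (simp add: h_def)
  have h_small: "norm (h j) \<le> norm y * (1/2) ^ j" for j
    using f[of "norm y * (1/2) ^ j"] False by (cases j) (auto simp: h_def less_imp_le)
  have "N (h j - h (Suc j)) \<le> M * norm y * (1/2) ^ j" for j
  proof -
    have "N (h j - h (Suc j)) \<le> M * norm (h j)" using f[of _ "h j"] False by (simp add: h_Suc)
    also have "\<dots> \<le> M * (norm y * (1/2) ^ j)" using h_small \<open>M \<ge> 0\<close> by (rule mult_left_mono)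
    finally show ?thesis by simp
  qed
  moreover have "h \<longlonglongrightarrow> 0"
  proof (rule Lim_null_comparison)
    show "\<forall>\<^sub>F j in sequentially. norm (h j) \<le> norm y * (1/2) ^ j" by (simp add: h_small)
    show "(\<lambda>j. norm y * (1/2::real) ^ j) \<longlonglongrightarrow> 0"
      by (intro tendsto_mult_right_zero LIMSEQ_realpow_zero) auto
  qed
  ultimately have "N (h 0) \<le> 2 * (M * norm y)"
    using \<open>M \<ge> 0\<close> by (intro N_le_of_geometric_increments) simp_all
  then show ?thesis by (simp add: h_def)
qed simp

theorem N_le_norm: obtains C where "C > 0" "\<And>x. N x \<le> C * norm x"
proof -
  obtain M where "M \<ge> 0" "\<And>y \<epsilon>. \<epsilon> > 0 \<Longrightarrow> \<exists>z. N z \<le> M * norm y \<and> norm (y - z) < \<epsilon>"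
    using approx_by_N_bounded by blast
  then have "N x \<le> (2 * M + 1) * norm x" for x
  proof -
    have "N x \<le> 2 * M * norm x" by (rule N_le_norm_of_approx) fact+
    also have "\<dots> \<le> (2 * M + 1) * norm x" by (simp add: mult_right_mono)
    finally show ?thesis .
  qed
  then show ?thesis using \<open>M \<ge> 0\<close> by (intro that[of "2 * M + 1"]) simp_all
qed

end

section \<open>Compact operators\<close>

lemma compact_closure_iff_totally_bounded:
  fixes S :: "'a::banach set"
  shows "compact (closure S) \<longleftrightarrow> (\<forall>\<epsilon>>0. \<exists>k. finite k \<and> S \<subseteq> (\<Union>x\<in>k. ball x \<epsilon>))"
proof
  assume "compact (closure S)"
  then show "\<forall>\<epsilon>>0. \<exists>k. finite k \<and> S \<subseteq> (\<Union>x\<in>k. ball x \<epsilon>)"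
    unfolding compact_eq_totally_bounded using closure_subset by (meson order_trans)
next
  assume S: "\<forall>\<epsilon>>0. \<exists>k. finite k \<and> S \<subseteq> (\<Union>x\<in>k. ball x \<epsilon>)"
  have "\<exists>k. finite k \<and> closure S \<subseteq> (\<Union>x\<in>k. ball x \<epsilon>)" if "\<epsilon> > 0" for \<epsilon>
  proof -
    obtain k where k: "finite k" "S \<subseteq> (\<Union>x\<in>k. ball x (\<epsilon> / 2))"
      using S \<open>\<epsilon> > 0\<close> half_gt_zero by blast
    have "closure S \<subseteq> (\<Union>x\<in>k. ball x \<epsilon>)"
    proof
      fix y assume "y \<in> closure S"
      then obtain s where "s \<in> S" "dist s y < \<epsilon> / 2"
        using closure_approachable \<open>\<epsilon> > 0\<close> half_gt_zero by blast
      moreover from this k obtain x where "x \<in> k" "dist x s < \<epsilon> / 2" by auto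
      ultimately have "dist x y < \<epsilon>" using dist_triangle[of x y s] by linarith
      with \<open>x \<in> k\<close> show "y \<in> (\<Union>x\<in>k. ball x \<epsilon>)" by auto
    qed
    with k show ?thesis by blast
  qed
  then show "compact (closure S)" by (simp add: compact_eq_totally_bounded complete_eq_closed)
qed

lemma compact_closure_subset:
  fixes C :: "'a::metric_space set"
  assumes "compact C" "S \<subseteq> C" shows "compact (closure S)"
proof -
  have "closure S \<subseteq> C" using closure_minimal[OF assms(2) compact_imp_closed[OF assms(1)]] .
  then show ?thesis using closed_Int_compact[OF closed_closure[of S] assms(1)] by (simp add: Int_absorb2)
qed

lemma compact_op_0: "compact_op 0"
  unfolding compact_op_def zero_blinfun.rep_eq by (subst image_constant[of 0]) auto

lemma compact_op_add:
  assumes "compact_op K" "compact_op L" shows "compact_op (K + L)"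
proof -
  let ?C = "\<lambda>K. closure (blinfun_apply K ` ball 0 1)"
  have "(K + L) x \<in> {a + b | a b. a \<in> ?C K \<and> b \<in> ?C L}" if "x \<in> ball 0 1" for x
  proof -
    have "K x \<in> ?C K" "L x \<in> ?C L" using that by (auto intro: closure_subset[THEN subsetD])
    then show ?thesis by (auto simp: blinfun.add_left)
  qed
  then have "blinfun_apply (K + L) ` ball 0 1 \<subseteq> {a + b | a b. a \<in> ?C K \<and> b \<in> ?C L}" by blast
  with assms show ?thesis unfolding compact_op_def by (intro compact_closure_subset[OF compact_sums])
qed

lemma compact_op_compose_left:
  assumes "compact_op K" shows "compact_op (S o\<^sub>L K)"
proof -
  have "continuous_on UNIV (blinfun_apply S)"
    by (rule linear_continuous_on[OF blinfun.bounded_linear_right])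
  then have "compact (blinfun_apply S ` closure (blinfun_apply K ` ball 0 1))"
    using assms unfolding compact_op_def by (intro compact_continuous_image) (auto intro: continuous_on_subset)
  moreover have "blinfun_apply (S o\<^sub>L K) ` ball 0 1 \<subseteq> blinfun_apply S ` closure (blinfun_apply K ` ball 0 1)"
    using closure_subset by fastforce
  ultimately show ?thesis unfolding compact_op_def by (rule compact_closure_subset)
qed

lemma compact_op_scaleR:
  assumes "compact_op K" shows "compact_op (c *\<^sub>R K)"
proof -
  have "compact_op ((c *\<^sub>R id_blinfun) o\<^sub>L K)" using assms by (rule compact_op_compose_left)
  moreover have "(c *\<^sub>R id_blinfun) o\<^sub>L K = c *\<^sub>R K" by (rule blinfun_eqI) (simp add: scaleR_blinfun.rep_eq)
  ultimately show ?thesis by simp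
qed

lemma compact_op_rank_one:
  assumes "bounded_linear f"
  shows "compact_op (Blinfun (\<lambda>x. f x *\<^sub>R v))"
proof -
  obtain B where B: "\<And>x. norm (f x) \<le> norm x * B" using bounded_linear.bounded[OF assms] by blast
  have "f x *\<^sub>R v \<in> (\<lambda>t. t *\<^sub>R v) ` cball 0 \<bar>B\<bar>" if "norm x < 1" for x
  proof -
    have "norm x * B \<le> norm x * \<bar>B\<bar>" by (simp add: mult_left_mono)
    also have "\<dots> \<le> \<bar>B\<bar>" using that by (simp add: mult_left_le_one_le)
    finally have "f x \<in> cball 0 \<bar>B\<bar>" using B[of x] by simp
    then show ?thesis by (rule imageI)
  qed
  then have "blinfun_apply (Blinfun (\<lambda>x. f x *\<^sub>R v)) ` ball 0 1 \<subseteq> (\<lambda>t. t *\<^sub>R v) ` cball 0 \<bar>B\<bar>"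
    by (auto simp: bounded_linear_Blinfun_apply[OF bounded_linear_scaleR_const[OF assms]])
  moreover have "compact ((\<lambda>t. t *\<^sub>R v) ` cball 0 \<bar>B\<bar>)"
    by (intro compact_continuous_image continuous_intros compact_cball)
  ultimately show ?thesis unfolding compact_op_def by (rule compact_closure_subset[rotated])
qed

lemma norm_blinfun_le_of_ball:
  assumes "b \<ge> 0" and ball: "\<And>x. norm x < 1 \<Longrightarrow> norm (blinfun_apply A x) \<le> b"
  shows "norm A \<le> 2 * b"
proof (rule norm_blinfun_bound)
  show "norm (blinfun_apply A x) \<le> 2 * b * norm x" for x
  proof (cases "x = 0")
    case False
    have "norm (blinfun_apply A (x /\<^sub>R (2 * norm x))) \<le> b" using False by (intro ball) simp
    then show ?thesis using False by (simp add: blinfun.scaleR_right field_simps)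
  qed simp
qed (use assms in simp)

lemma compact_op_limit:
  assumes "K' \<longlonglongrightarrow> K" and "\<And>n. compact_op (K' n)"
  shows "compact_op K"
  unfolding compact_op_def compact_closure_iff_totally_bounded
proof (intro allI impI)
  fix \<epsilon> :: real assume "\<epsilon> > 0"
  then obtain n where n: "norm (K' n - K) < \<epsilon> / 2"
    using LIMSEQ_D[OF assms(1), of "\<epsilon> / 2"] by (meson half_gt_zero le_refl)
  obtain k where k: "finite k" "blinfun_apply (K' n) ` ball 0 1 \<subseteq> (\<Union>y\<in>k. ball y (\<epsilon> / 2))"
    using assms(2)[of n] \<open>\<epsilon> > 0\<close> unfolding compact_op_def compact_closure_iff_totally_bounded
    by (meson half_gt_zero)
  have "K x \<in> (\<Union>y\<in>k. ball y \<epsilon>)" if "norm x < 1" for x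
  proof -
    have "K' n x \<in> blinfun_apply (K' n) ` ball 0 1" using \<open>norm x < 1\<close> by simp
    then have "K' n x \<in> (\<Union>y\<in>k. ball y (\<epsilon> / 2))" by (rule subsetD[OF k(2)])
    then obtain y where y: "y \<in> k" "dist y (K' n x) < \<epsilon> / 2" by auto
    have "dist (K' n x) (K x) = norm ((K' n - K) x)" by (simp add: dist_norm blinfun.diff_left)
    also have "\<dots> \<le> norm (K' n - K) * norm x" by (rule norm_blinfun)
    also have "\<dots> \<le> norm (K' n - K)" using \<open>norm x < 1\<close> by (simp add: mult_left_le)
    finally have "dist y (K x) < \<epsilon>" using y n dist_triangle[of y "K x" "K' n x"] by linarith
    then have "K x \<in> ball y \<epsilon>" by simp
    with y(1) show ?thesis by (rule UN_I)
  qed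
  with k show "\<exists>k. finite k \<and> blinfun_apply K ` ball 0 1 \<subseteq> (\<Union>y\<in>k. ball y \<epsilon>)" by auto
qed

lemma norm_apply_diff_le_of_cover:
  fixes P :: "'a::real_normed_vector \<Rightarrow>\<^sub>L 'a"
  assumes "norm P \<le> B" and "z \<in> (\<Union>y\<in>F. ball y \<delta>)" and close: "\<And>y. y \<in> F \<Longrightarrow> dist (P y) y < \<delta>"
  shows "norm (P z - z) \<le> (B + 2) * \<delta>"
proof -
  obtain y where y: "y \<in> F" "dist y z < \<delta>" using assms(2) by auto
  have "norm (P (z - y)) \<le> norm P * norm (z - y)" by (rule norm_blinfun)
  also have "\<dots> \<le> B * \<delta>"
    using y(2) assms(1) order_trans[OF norm_ge_zero assms(1)]
    by (intro mult_mono) (simp_all add: dist_norm norm_minus_commute)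
  finally have "norm (P (z - y)) \<le> B * \<delta>" .
  moreover have "norm (P z - z) \<le> norm (P (z - y)) + norm (P y - y) + norm (y - z)"
  proof -
    have "norm (P z - z) = norm ((P (z - y) + (P y - y)) + (y - z))"
      by (simp add: blinfun.diff_right algebra_simps)
    also have "\<dots> \<le> norm (P (z - y) + (P y - y)) + norm (y - z)" by (rule norm_triangle_ineq)
    also have "\<dots> \<le> norm (P (z - y)) + norm (P y - y) + norm (y - z)"
      using norm_triangle_ineq[of "P (z - y)" "P y - y"] by simp
    finally show ?thesis .
  qed
  moreover have "norm (P y - y) < \<delta>" "norm (y - z) < \<delta>"
    using close[OF y(1)] y(2) by (simp_all add: dist_norm)
  ultimately show ?thesis unfolding distrib_right by linarith
qed

text \<open>Strong convergence with bounded norms is uniform on the relatively compact set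
  \<open>K ` ball 0 1\<close>.\<close>
lemma compose_compact_op_tendsto:
  assumes K: "compact_op K" and bound: "\<And>n. norm (P n) \<le> B"
    and strong: "\<And>x. (\<lambda>n. blinfun_apply (P n) x) \<longlonglongrightarrow> x"
  shows "(\<lambda>n. P n o\<^sub>L K) \<longlonglongrightarrow> K"
proof (rule LIMSEQ_I)
  fix \<epsilon> :: real assume "\<epsilon> > 0"
  have B: "B \<ge> 0" by (rule order_trans[OF norm_ge_zero bound])
  define \<delta> where "\<delta> = \<epsilon> / (4 * (B + 2))"
  have \<delta>: "\<delta> > 0" using \<open>\<epsilon> > 0\<close> B by (simp add: \<delta>_def)
  obtain F where F: "finite F" "blinfun_apply K ` ball 0 1 \<subseteq> (\<Union>y\<in>F. ball y \<delta>)"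
    using K \<delta> unfolding compact_op_def compact_closure_iff_totally_bounded by blast
  have "eventually (\<lambda>n. \<forall>y\<in>F. dist (P n y) y < \<delta>) sequentially"
    using F(1) by (rule eventually_ball_finite) (use tendstoD[OF strong \<delta>] in blast)
  then obtain M where M: "\<And>n y. n \<ge> M \<Longrightarrow> y \<in> F \<Longrightarrow> dist (P n y) y < \<delta>"
    unfolding eventually_sequentially by blast
  have "norm ((P n o\<^sub>L K) - K) < \<epsilon>" if "n \<ge> M" for n
  proof -
    have "norm (P n (K x) - K x) \<le> (B + 2) * \<delta>" if "norm x < 1" for x
    proof (rule norm_apply_diff_le_of_cover[OF bound])
      show "K x \<in> (\<Union>y\<in>F. ball y \<delta>)" using \<open>norm x < 1\<close> by (intro subsetD[OF F(2)]) simp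
    qed (rule M[OF \<open>n \<ge> M\<close>])
    then have "norm ((P n o\<^sub>L K) - K) \<le> 2 * ((B + 2) * \<delta>)"
      using B \<delta> by (intro norm_blinfun_le_of_ball) (simp_all add: blinfun.diff_left)
    also have "\<dots> = \<epsilon> / 2" using B by (simp add: \<delta>_def field_simps)
    also have "\<dots> < \<epsilon>" using \<open>\<epsilon> > 0\<close> by simp
    finally show ?thesis .
  qed
  then show "\<exists>M. \<forall>n\<ge>M. norm ((P n o\<^sub>L K) - K) < \<epsilon>" by (intro exI[of _ M] allI impI)
qed

lemma norm_diff_limit_le:
  fixes g :: "'a::real_normed_vector \<Rightarrow> 'b::real_normed_vector"
  assumes "linear g" and "\<And>z. norm (g z) \<le> N z" and "\<forall>m'\<ge>M. N (s m - s m') < \<epsilon>"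
    and "(\<lambda>m'. g (s m')) \<longlonglongrightarrow> v"
  shows "norm (g (s m) - v) \<le> \<epsilon>"
proof (rule tendsto_upperbound[OF tendsto_norm[OF tendsto_diff[OF tendsto_const assms(4)]]])
  have "norm (g (s m) - g (s m')) \<le> \<epsilon>" if "m' \<ge> M" for m'
    using assms(2)[of "s m - s m'"] assms(3)[rule_format, OF that] by (simp add: linear_diff[OF assms(1)])
  then show "\<forall>\<^sub>F m' in sequentially. norm (g (s m) - g (s m')) \<le> \<epsilon>"
    unfolding eventually_sequentially by blast
qed simp

section \<open>Schauder bases\<close>

definition basis_proj :: "(nat \<Rightarrow> 'a::banach) \<Rightarrow> nat \<Rightarrow> 'a \<Rightarrow> 'a" where
  "basis_proj e n x = (\<Sum>i<n. coord e i x *\<^sub>R e i)"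

definition basis_norm :: "(nat \<Rightarrow> 'a::banach) \<Rightarrow> 'a \<Rightarrow> real" where
  "basis_norm e x = (SUP n. norm (basis_proj e n x))"

definition coord_proj :: "(nat \<Rightarrow> 'a::banach) \<Rightarrow> nat \<Rightarrow> 'a \<Rightarrow>\<^sub>L 'a" where
  "coord_proj e i = Blinfun (\<lambda>x. coord e i x *\<^sub>R e i)"

locale schauder =
  fixes e :: "nat \<Rightarrow> 'a::banach"
  assumes basis: "schauder_basis e"
begin

lemma coord_sums: "(\<lambda>n. coord e n x *\<^sub>R e n) sums x"
  using theI'[OF basis[unfolded schauder_basis_def, rule_format, of x]] unfolding coord_def .

lemma coord_unique: "(\<lambda>n. a n *\<^sub>R e n) sums x \<Longrightarrow> coord e i x = a i"
  using the1_equality[OF basis[unfolded schauder_basis_def, rule_format, of x]] unfolding coord_def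
  by simp

lemma coord_add: "coord e i (x + y) = coord e i x + coord e i y"
proof -
  have "(\<lambda>n. (coord e n x + coord e n y) *\<^sub>R e n) sums (x + y)"
    unfolding scaleR_add_left by (intro sums_add coord_sums)
  then show ?thesis by (rule coord_unique)
qed

lemma coord_scaleR: "coord e i (c *\<^sub>R x) = c * coord e i x"
proof -
  have "(\<lambda>n. (c * coord e n x) *\<^sub>R e n) sums (c *\<^sub>R x)"
    unfolding scaleR_scaleR[symmetric] by (intro sums_scaleR_right coord_sums)
  then show ?thesis by (rule coord_unique)
qed

lemma linear_coord: "linear (coord e i)"
  by (rule linearI) (simp_all add: coord_add coord_scaleR)

lemma coord_diff: "coord e i (x - y) = coord e i x - coord e i y"
  using linear_diff[OF linear_coord] .

lemma coord_sum: "coord e i (sum f A) = (\<Sum>j\<in>A. coord e i (f j))"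
  using linear_sum[OF linear_coord] .

lemma coord_basis: "coord e i (e j) = (if i = j then 1 else 0)"
proof -
  have "(\<lambda>n. (if n = j then 1 else 0) *\<^sub>R e n) = (\<lambda>n. if n = j then e n else 0)" by auto
  then have "(\<lambda>n. (if n = j then 1 else 0) *\<^sub>R e n) sums e j" using sums_single[of j e] by simp
  then show ?thesis by (rule coord_unique)
qed

lemma coord_0 [simp]: "coord e i 0 = 0"
  by (rule linear_0[OF linear_coord])

lemma basis_nonzero: "e i \<noteq> 0"
  using coord_basis[of i i] by auto

lemma coord_eq_0_imp: "(\<And>i. coord e i x = 0) \<Longrightarrow> x = 0"
  using sums_unique2[OF sums_zero, of x] coord_sums[of x] by simp

lemma basis_proj_tendsto: "(\<lambda>n. basis_proj e n x) \<longlonglongrightarrow> x"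
  using coord_sums[of x] unfolding sums_def basis_proj_def .

lemma linear_basis_proj: "linear (basis_proj e n)"
  by (rule linearI)
    (simp_all add: basis_proj_def coord_add coord_scaleR scaleR_add_left sum.distrib scaleR_sum_right)

lemma norm_basis_proj_le: "norm (basis_proj e n x) \<le> basis_norm e x"
proof -
  have "bdd_above (range (\<lambda>n. norm (basis_proj e n x)))"
    by (rule Bseq_bdd_above'[OF convergent_imp_Bseq[OF convergentI[OF basis_proj_tendsto]]])
  then show ?thesis unfolding basis_norm_def by (rule cSUP_upper[OF UNIV_I])
qed

lemma basis_norm_le: "(\<And>n. norm (basis_proj e n x) \<le> b) \<Longrightarrow> basis_norm e x \<le> b"
  unfolding basis_norm_def by (rule cSUP_least) auto

lemma norm_le_basis_norm: "norm x \<le> basis_norm e x"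
proof (rule LIMSEQ_le_const2)
  show "(\<lambda>n. norm (basis_proj e n x)) \<longlonglongrightarrow> norm x" by (rule tendsto_norm[OF basis_proj_tendsto])
qed (use norm_basis_proj_le in blast)

lemma basis_norm_add: "basis_norm e (x + y) \<le> basis_norm e x + basis_norm e y"
proof (rule basis_norm_le)
  fix n
  have "norm (basis_proj e n (x + y)) \<le> norm (basis_proj e n x) + norm (basis_proj e n y)"
    unfolding linear_add[OF linear_basis_proj] by (rule norm_triangle_ineq)
  also have "\<dots> \<le> basis_norm e x + basis_norm e y" by (intro add_mono norm_basis_proj_le)
  finally show "norm (basis_proj e n (x + y)) \<le> basis_norm e x + basis_norm e y" .
qed

lemma basis_norm_scaleR_le: "basis_norm e (c *\<^sub>R x) \<le> \<bar>c\<bar> * basis_norm e x"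
  by (rule basis_norm_le)
    (simp add: linear_scale[OF linear_basis_proj] mult_left_mono norm_basis_proj_le)

lemma basis_norm_scaleR: "basis_norm e (c *\<^sub>R x) = \<bar>c\<bar> * basis_norm e x"
proof (cases "c = 0")
  case True
  then show ?thesis using basis_norm_scaleR_le[of 0 x] norm_le_basis_norm[of 0] by simp
next
  case False
  have "\<bar>c\<bar> * basis_norm e x = \<bar>c\<bar> * basis_norm e (inverse c *\<^sub>R c *\<^sub>R x)" using False by simp
  also have "\<dots> \<le> \<bar>c\<bar> * (\<bar>inverse c\<bar> * basis_norm e (c *\<^sub>R x))"
    by (intro mult_left_mono basis_norm_scaleR_le) simp
  also have "\<dots> = basis_norm e (c *\<^sub>R x)" using False by (simp add: abs_inverse)
  finally show ?thesis using basis_norm_scaleR_le[of c x] by linarith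
qed

lemma coord_le_basis_norm: "\<bar>coord e i x\<bar> * norm (e i) \<le> 2 * basis_norm e x"
proof -
  have "coord e i x *\<^sub>R e i = basis_proj e (Suc i) x - basis_proj e i x" by (simp add: basis_proj_def)
  then have "\<bar>coord e i x\<bar> * norm (e i) \<le> norm (basis_proj e (Suc i) x) + norm (basis_proj e i x)"
    by (metis norm_scaleR norm_triangle_ineq4)
  then show ?thesis using norm_basis_proj_le[of "Suc i" x] norm_basis_proj_le[of i x] by linarith
qed

lemma basis_norm_nonneg: "0 \<le> basis_norm e x"
  using norm_le_basis_norm[of x] norm_ge_zero[of x] by linarith

lemma Cauchy_coord:
  assumes C: "\<And>\<epsilon>. \<epsilon> > 0 \<Longrightarrow> \<exists>M. \<forall>m\<ge>M. \<forall>n\<ge>M. basis_norm e (s m - s n) < \<epsilon>"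
  shows "Cauchy (\<lambda>m. coord e i (s m))"
proof (rule metric_CauchyI)
  fix \<epsilon> :: real assume "\<epsilon> > 0"
  have ne: "norm (e i) > 0" using basis_nonzero by simp
  obtain M where M: "\<forall>m\<ge>M. \<forall>n\<ge>M. basis_norm e (s m - s n) < \<epsilon> * norm (e i) / 2"
    using C[of "\<epsilon> * norm (e i) / 2"] \<open>\<epsilon> > 0\<close> ne by auto
  have "dist (coord e i (s m)) (coord e i (s n)) < \<epsilon>" if "m \<ge> M" "n \<ge> M" for m n
  proof -
    have "\<bar>coord e i (s m - s n)\<bar> * norm (e i) < \<epsilon> * norm (e i)"
      using coord_le_basis_norm[of i "s m - s n"] M that by fastforce
    then show ?thesis using ne by (simp add: dist_real_def coord_diff)
  qed
  then show "\<exists>M. \<forall>m\<ge>M. \<forall>n\<ge>M. dist (coord e i (s m)) (coord e i (s n)) < \<epsilon>" by blast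
qed

lemma Cauchy_of_basis_norm_Cauchy:
  assumes C: "\<And>\<epsilon>. \<epsilon> > 0 \<Longrightarrow> \<exists>M. \<forall>m\<ge>M. \<forall>n\<ge>M. basis_norm e (s m - s n) < \<epsilon>"
  shows "Cauchy s"
proof (rule metric_CauchyI)
  fix \<epsilon> :: real assume "\<epsilon> > 0"
  then obtain M where M: "\<forall>m\<ge>M. \<forall>n\<ge>M. basis_norm e (s m - s n) < \<epsilon>" using C by blast
  have "dist (s m) (s n) < \<epsilon>" if "m \<ge> M" "n \<ge> M" for m n
    using M that norm_le_basis_norm[of "s m - s n"] unfolding dist_norm by force
  then show "\<exists>M. \<forall>m\<ge>M. \<forall>n\<ge>M. dist (s m) (s n) < \<epsilon>" by blast
qed

text \<open>The limits of the coordinates of a \<open>basis_norm\<close>-Cauchy sequence are the coordinates of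
  its norm limit \<open>x\<close>: their partial sums \<open>u n\<close> approximate the partial sums of \<open>s m\<close>
  uniformly in \<open>n\<close>, hence converge to \<open>x\<close>.\<close>
lemma coord_tendsto_of_basis_norm_Cauchy:
  assumes C: "\<And>\<epsilon>. \<epsilon> > 0 \<Longrightarrow> \<exists>M. \<forall>m\<ge>M. \<forall>n\<ge>M. basis_norm e (s m - s n) < \<epsilon>"
    and x: "s \<longlonglongrightarrow> x"
  shows "(\<lambda>m. coord e i (s m)) \<longlonglongrightarrow> coord e i x"
proof -
  define a where "a i = lim (\<lambda>m. coord e i (s m))" for i
  have a: "(\<lambda>m. coord e i (s m)) \<longlonglongrightarrow> a i" for i
    unfolding a_def using Cauchy_coord[OF C] by (simp add: Cauchy_convergent_iff convergent_LIMSEQ_iff)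
  define u where "u n = (\<Sum>i<n. a i *\<^sub>R e i)" for n
  have u: "(\<lambda>m. basis_proj e n (s m)) \<longlonglongrightarrow> u n" for n
    unfolding basis_proj_def u_def by (intro tendsto_sum tendsto_scaleR a tendsto_const)
  have "u \<longlonglongrightarrow> x"
  proof (rule LIMSEQ_I)
    fix r :: real assume "r > 0"
    then obtain M where M: "\<forall>m\<ge>M. \<forall>n\<ge>M. basis_norm e (s m - s n) < r / 3"
      using C[of "r / 3"] by auto
    obtain n0 where n0: "\<forall>n\<ge>n0. norm (basis_proj e n (s M) - s M) < r / 3"
      using LIMSEQ_D[OF basis_proj_tendsto, of "r / 3"] \<open>r > 0\<close> by auto
    have "norm (u n - x) < r" if "n \<ge> n0" for n
    proof -
      have "norm (u n - x) \<le> norm (u n - basis_proj e n (s M)) + norm (basis_proj e n (s M) - s M)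
          + norm (s M - x)"
        using norm_triangle_ineq[of "u n - basis_proj e n (s M)" "basis_proj e n (s M) - s M"]
          norm_triangle_ineq[of "u n - basis_proj e n (s M) + (basis_proj e n (s M) - s M)" "s M - x"]
        by simp
      moreover have "norm (basis_proj e n (s M) - u n) \<le> r / 3"
        using M by (intro norm_diff_limit_le[OF linear_basis_proj norm_basis_proj_le _ u]) auto
      moreover have "norm (s M - x) \<le> r / 3"
        using M by (intro norm_diff_limit_le[where g = "\<lambda>z. z", OF linear_ident norm_le_basis_norm _ x]) auto
      moreover have "norm (basis_proj e n (s M) - s M) < r / 3" using n0 that by simp
      ultimately show ?thesis by (simp add: norm_minus_commute)
    qed
    then show "\<exists>n0. \<forall>n\<ge>n0. norm (u n - x) < r" by blast
  qed
  then have "(\<lambda>i. a i *\<^sub>R e i) sums x" unfolding sums_def u_def .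
  then show ?thesis using a by (simp add: coord_unique)
qed

lemma basis_norm_complete:
  assumes C: "\<And>\<epsilon>. \<epsilon> > 0 \<Longrightarrow> \<exists>M. \<forall>m\<ge>M. \<forall>n\<ge>M. basis_norm e (s m - s n) < \<epsilon>"
  shows "\<exists>l. (\<lambda>n. basis_norm e (s n - l)) \<longlonglongrightarrow> 0"
proof -
  obtain x where x: "s \<longlonglongrightarrow> x"
    using Cauchy_of_basis_norm_Cauchy[OF C] Cauchy_convergent_iff convergent_def by blast
  have proj: "(\<lambda>m. basis_proj e n (s m)) \<longlonglongrightarrow> basis_proj e n x" for n
    unfolding basis_proj_def by (intro tendsto_sum tendsto_scaleR coord_tendsto_of_basis_norm_Cauchy[OF C x] tendsto_const)
  have "(\<lambda>m. basis_norm e (s m - x)) \<longlonglongrightarrow> 0"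
  proof (rule LIMSEQ_I)
    fix r :: real assume "r > 0"
    then obtain M where M: "\<forall>m\<ge>M. \<forall>n\<ge>M. basis_norm e (s m - s n) < r / 2" using C[of "r / 2"] by auto
    have "norm (basis_norm e (s m - x) - 0) < r" if "m \<ge> M" for m
    proof -
      have "norm (basis_proj e n (s m) - basis_proj e n x) \<le> r / 2" for n
        using M that by (intro norm_diff_limit_le[OF linear_basis_proj norm_basis_proj_le _ proj]) auto
      then have "basis_norm e (s m - x) \<le> r / 2"
        by (intro basis_norm_le) (simp add: linear_diff[OF linear_basis_proj])
      then show ?thesis using basis_norm_nonneg[of "s m - x"] \<open>r > 0\<close> by simp
    qed
    then show "\<exists>M. \<forall>m\<ge>M. norm (basis_norm e (s m - x) - 0) < r" by blast
  qed
  then show ?thesis ..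
qed

sublocale complete_dominating_norm "basis_norm e"
  by unfold_locales
    (rule basis_norm_add, rule basis_norm_scaleR, rule norm_le_basis_norm, rule basis_norm_complete, assumption)

lemma basis_proj_bound:
  obtains C where "C > 0" "\<And>n x. norm (basis_proj e n x) \<le> C * norm x"
proof -
  obtain C where "C > 0" "\<And>x. basis_norm e x \<le> C * norm x" using N_le_norm by blast
  then show ?thesis using norm_basis_proj_le order_trans by (intro that[of C]) blast+
qed

lemma coord_bound:
  obtains C where "C > 0" "\<And>i x. \<bar>coord e i x\<bar> * norm (e i) \<le> C * norm x"
proof -
  obtain C where C: "C > 0" "\<And>x. basis_norm e x \<le> C * norm x" using N_le_norm by blast
  have "\<bar>coord e i x\<bar> * norm (e i) \<le> (2 * C) * norm x" for i x
    using coord_le_basis_norm[of i x] C(2)[of x] by linarith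
  then show ?thesis using C(1) by (intro that[of "2 * C"]) simp_all
qed

lemma bounded_linear_coord: "bounded_linear (coord e i)"
proof -
  obtain C where C: "C > 0" "\<And>i x. \<bar>coord e i x\<bar> * norm (e i) \<le> C * norm x" using coord_bound by blast
  have ne: "norm (e i) > 0" using basis_nonzero by simp
  show ?thesis
  proof (rule bounded_linear_intro[where K = "C / norm (e i)"])
    show "norm (coord e i x) \<le> norm x * (C / norm (e i))" for x
      using C(2)[of i x] ne by (simp add: field_simps)
  qed (simp_all add: coord_add coord_scaleR)
qed

lemma coord_tendsto: "f \<longlonglongrightarrow> x \<Longrightarrow> (\<lambda>n. coord e i (f n)) \<longlonglongrightarrow> coord e i x"
  by (rule bounded_linear.tendsto[OF bounded_linear_coord])

lemma coord_proj_apply [simp]: "coord_proj e i x = coord e i x *\<^sub>R e i"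
  unfolding coord_proj_def
  by (simp add: bounded_linear_Blinfun_apply bounded_linear_scaleR_const bounded_linear_coord)

lemma sum_coord_proj_apply: "(\<Sum>i<n. coord_proj e i) x = basis_proj e n x"
  by (simp add: blinfun.sum_left basis_proj_def)

lemma compact_op_coord_proj: "compact_op (coord_proj e i)"
  unfolding coord_proj_def by (rule compact_op_rank_one[OF bounded_linear_coord])

lemma diagonal_op_apply: "diagonal_op e T \<Longrightarrow> T (e i) = lam e T i *\<^sub>R e i"
proof -
  assume "diagonal_op e T"
  then have "coord e n (T (e i)) = (if n = i then lam e T i else 0)" for n
    unfolding diagonal_op_def lam_def by auto
  then have "(\<lambda>n. (if n = i then lam e T i else 0) *\<^sub>R e n) sums T (e i)"
    using coord_sums[of "T (e i)"] by simp
  moreover have "(\<lambda>n. (if n = i then lam e T i else 0) *\<^sub>R e n) = (\<lambda>n. if n = i then lam e T i *\<^sub>R e i else 0)"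
    by auto
  ultimately show ?thesis using sums_single[of i "\<lambda>_. lam e T i *\<^sub>R e i"] by (simp add: sums_unique2)
qed

lemma diagonal_opI:
  fixes T :: "'a \<Rightarrow>\<^sub>L 'a"
  shows "(\<And>i. T (e i) = d i *\<^sub>R e i) \<Longrightarrow> diagonal_op e T"
  unfolding diagonal_op_def by (simp add: coord_scaleR coord_basis)

lemma lam_eqI:
  fixes T :: "'a \<Rightarrow>\<^sub>L 'a"
  shows "T (e i) = d *\<^sub>R e i \<Longrightarrow> lam e T i = d"
  unfolding lam_def by (simp add: coord_scaleR coord_basis)

lemma coord_apply_diagonal:
  fixes T :: "'a \<Rightarrow>\<^sub>L 'a"
  assumes T: "\<And>j. T (e j) = d j *\<^sub>R e j"
  shows "coord e i (T x) = d i * coord e i x"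
proof -
  have "(\<lambda>n. coord e i (T (basis_proj e n x))) \<longlonglongrightarrow> coord e i (T x)"
    by (intro coord_tendsto blinfun.tendsto[OF tendsto_const basis_proj_tendsto])
  moreover have "coord e i (T (basis_proj e n x)) = d i * coord e i x" if "n > i" for n
    using that by (simp add: basis_proj_def blinfun.sum_right blinfun.scaleR_right T coord_sum coord_scaleR
        coord_basis if_distrib cong: if_cong)
  then have "(\<lambda>n. coord e i (T (basis_proj e n x))) \<longlonglongrightarrow> d i * coord e i x"
    by (intro tendsto_eventually eventually_mono[OF eventually_gt_at_top[of i]]) simp
  ultimately show ?thesis by (rule LIMSEQ_unique)
qed

lemma diagonal_op_0: "diagonal_op e 0"
  by (rule diagonal_opI[where d = "\<lambda>i. 0"]) simp

lemma diagonal_op_add: "diagonal_op e K \<Longrightarrow> diagonal_op e L \<Longrightarrow> diagonal_op e (K + L)"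
  by (rule diagonal_opI[where d = "\<lambda>i. lam e K i + lam e L i"])
    (simp add: blinfun.add_left diagonal_op_apply scaleR_add_left)

lemma diagonal_op_scaleR: "diagonal_op e K \<Longrightarrow> diagonal_op e (c *\<^sub>R K)"
  by (rule diagonal_opI[where d = "\<lambda>i. c * lam e K i"]) (simp add: scaleR_blinfun.rep_eq diagonal_op_apply)

lemma diagonal_op_compose: "diagonal_op e K \<Longrightarrow> diagonal_op e L \<Longrightarrow> diagonal_op e (K o\<^sub>L L)"
  by (rule diagonal_opI[where d = "\<lambda>i. lam e K i * lam e L i"]) (simp add: blinfun.scaleR_right diagonal_op_apply)

lemma diagonal_op_limit:
  assumes "K' \<longlonglongrightarrow> K" and "\<And>n. diagonal_op e (K' n)"
  shows "diagonal_op e K"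
  unfolding diagonal_op_def
proof (intro allI impI)
  fix i j :: nat assume "i \<noteq> j"
  have "(\<lambda>n. coord e j (K' n (e i))) \<longlonglongrightarrow> coord e j (K (e i))"
    by (intro coord_tendsto blinfun.tendsto[OF assms(1) tendsto_const])
  moreover have "coord e j (K' n (e i)) = 0" for n
    using assms(2)[of n] \<open>i \<noteq> j\<close> unfolding diagonal_op_def by blast
  ultimately show "coord e j (K (e i)) = 0" by (simp add: LIMSEQ_const_iff)
qed

lemma lam_add: "lam e (S + T) i = lam e S i + lam e T i"
  unfolding lam_def by (simp add: blinfun.add_left coord_add)

lemma lam_scaleR: "lam e (c *\<^sub>R T) i = c * lam e T i"
  unfolding lam_def by (simp add: scaleR_blinfun.rep_eq coord_scaleR)

lemma lam_diff: "lam e (S - T) i = lam e S i - lam e T i"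
  unfolding lam_def by (simp add: blinfun.diff_left coord_diff)

lemma lam_id: "lam e id_blinfun i = 1"
  unfolding lam_def by (simp add: coord_basis)

lemma lam_lipschitz:
  obtains C where "C > 0" "\<And>S T i. \<bar>lam e S i - lam e T i\<bar> \<le> C * norm (S - T)"
proof -
  obtain C where C: "C > 0" "\<And>i x. \<bar>coord e i x\<bar> * norm (e i) \<le> C * norm x" using coord_bound by blast
  have "\<bar>lam e S i - lam e T i\<bar> \<le> C * norm (S - T)" for S T i
  proof -
    have ne: "norm (e i) > 0" using basis_nonzero by simp
    have "\<bar>lam e S i - lam e T i\<bar> * norm (e i) = \<bar>coord e i ((S - T) (e i))\<bar> * norm (e i)"
      by (simp add: lam_def blinfun.diff_left coord_diff)
    also have "\<dots> \<le> C * norm ((S - T) (e i))" by (rule C(2))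
    also have "\<dots> \<le> C * (norm (S - T) * norm (e i))" using C(1) by (intro mult_left_mono norm_blinfun) simp
    finally show ?thesis using ne by (simp add: field_simps)
  qed
  with C(1) show ?thesis by (rule that)
qed

lemma tendsto_0_of_coord_eventually_0:
  assumes C: "compact C" and v: "\<And>i. v i \<in> C"
    and coord: "\<And>j. \<forall>\<^sub>F i in sequentially. coord e j (v i) = 0"
  shows "v \<longlonglongrightarrow> 0"
proof (rule ccontr)
  assume "\<not> v \<longlonglongrightarrow> 0"
  then obtain \<epsilon> where \<epsilon>: "\<epsilon> > 0" and "\<forall>N. \<exists>n\<ge>N. \<not> norm (v n - 0) < \<epsilon>"
    unfolding LIMSEQ_iff by blast
  then have "infinite {n. norm (v n) \<ge> \<epsilon>}"
    unfolding infinite_nat_iff_unbounded_le by (auto simp: not_less)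
  then obtain r :: "nat \<Rightarrow> nat" where r: "strict_mono r" "\<And>n. norm (v (r n)) \<ge> \<epsilon>"
    using infinite_enumerate by blast
  have "\<forall>n. (v \<circ> r) n \<in> C" using v by simp
  then obtain l r' where r': "strict_mono r'" "((v \<circ> r) \<circ> r') \<longlonglongrightarrow> l"
    using compact_imp_seq_compact[OF C] unfolding seq_compact_def by blast
  have "norm l \<ge> \<epsilon>"
  proof (rule tendsto_lowerbound[OF tendsto_norm[OF r'(2)]])
    show "\<forall>\<^sub>F i in sequentially. \<epsilon> \<le> norm (((v \<circ> r) \<circ> r') i)"
      using r(2) by (simp add: always_eventually)
  qed simp
  moreover have "l = 0"
  proof (rule coord_eq_0_imp)
    fix j
    obtain N where N: "\<And>i. i \<ge> N \<Longrightarrow> coord e j (v i) = 0"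
      using coord[of j] unfolding eventually_sequentially by blast
    have "coord e j (((v \<circ> r) \<circ> r') n) = 0" if "n \<ge> N" for n
    proof -
      have "r (r' n) \<ge> n" using seq_suble[OF strict_mono_o[OF r(1) r'(1)], of n] by simp
      then show ?thesis using N[of "r (r' n)"] that by simp
    qed
    then have "(\<lambda>n. coord e j (((v \<circ> r) \<circ> r') n)) \<longlonglongrightarrow> 0"
      by (intro tendsto_eventually eventually_sequentiallyI)
    with coord_tendsto[OF r'(2)] show "coord e j l = 0" by (rule LIMSEQ_unique)
  qed
  ultimately show False using \<epsilon> by simp
qed

text \<open>The images \<open>K (e i / (2 \<parallel>e i\<parallel>)) = (\<lambda>\<^sub>i / (2 \<parallel>e i\<parallel>)) e i\<close> of norm \<open>\<bar>\<lambda>\<^sub>i\<bar> / 2\<close>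
  lie in a compact set and have only one nonzero coordinate.\<close>
lemma compact_diagonal_lam_tendsto_0:
  assumes K: "compact_op K" and D: "diagonal_op e K"
  shows "lam e K \<longlonglongrightarrow> 0"
proof -
  have ne: "norm (e i) > 0" for i using basis_nonzero by simp
  define v where "v i = K (e i /\<^sub>R (2 * norm (e i)))" for i
  have v_eq: "v i = (inverse (2 * norm (e i)) * lam e K i) *\<^sub>R e i" for i
    unfolding v_def by (simp add: blinfun.scaleR_right diagonal_op_apply[OF D])
  have "v i \<in> closure (blinfun_apply K ` ball 0 1)" for i
    using ne[of i] unfolding v_def by (intro closure_subset[THEN subsetD] imageI) simp
  moreover have "\<forall>\<^sub>F i in sequentially. coord e j (v i) = 0" for j
    using eventually_gt_at_top[of j] by eventually_elim (simp add: v_eq coord_scaleR coord_basis)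
  ultimately have "v \<longlonglongrightarrow> 0"
    using K unfolding compact_op_def by (intro tendsto_0_of_coord_eventually_0) blast+
  then have "(\<lambda>i. 2 * norm (v i)) \<longlonglongrightarrow> 0" by (simp add: tendsto_norm_zero_iff tendsto_mult_right_zero)
  moreover have "2 * norm (v i) = \<bar>lam e K i\<bar>" for i using ne[of i] by (simp add: v_eq abs_mult field_simps)
  ultimately show ?thesis by (simp add: tendsto_rabs_zero_iff)
qed

lemma diag_algE:
  assumes "T \<in> diag_alg e"
  obtains c K where "T = c *\<^sub>R id_blinfun + K" "compact_op K" "diagonal_op e K"
  using assms unfolding diag_alg_def by blast

lemma diag_algI: "compact_op K \<Longrightarrow> diagonal_op e K \<Longrightarrow> c *\<^sub>R id_blinfun + K \<in> diag_alg e"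
  unfolding diag_alg_def by blast

lemma lam_scalar_plus_tendsto:
  assumes "compact_op K" "diagonal_op e K"
  shows "lam e (c *\<^sub>R id_blinfun + K) \<longlonglongrightarrow> c"
proof -
  have "(\<lambda>i. c + lam e K i) \<longlonglongrightarrow> c + 0"
    by (intro tendsto_add tendsto_const compact_diagonal_lam_tendsto_0 assms)
  moreover have "lam e (c *\<^sub>R id_blinfun + K) = (\<lambda>i. c + lam e K i)"
    by (rule ext) (simp add: lam_add lam_scaleR lam_id)
  ultimately show ?thesis by simp
qed

lemma lam_ext_infinity_eqI: "lam e T \<longlonglongrightarrow> a \<Longrightarrow> lam_ext e T \<infinity> = a"
  unfolding lam_ext_def by (simp add: limI)

lemma lam_tendsto_lam_ext: "T \<in> diag_alg e \<Longrightarrow> lam e T \<longlonglongrightarrow> lam_ext e T \<infinity>"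
  by (metis diag_algE lam_ext_infinity_eqI lam_scalar_plus_tendsto)

lemma diag_alg_minus_lam_ext:
  assumes "T \<in> diag_alg e"
  shows "compact_op (T - lam_ext e T \<infinity> *\<^sub>R id_blinfun)" "diagonal_op e (T - lam_ext e T \<infinity> *\<^sub>R id_blinfun)"
proof -
  obtain c K where T: "T = c *\<^sub>R id_blinfun + K" "compact_op K" "diagonal_op e K"
    using assms by (rule diag_algE)
  have "lam_ext e T \<infinity> = c" unfolding T(1) by (rule lam_ext_infinity_eqI[OF lam_scalar_plus_tendsto[OF T(2,3)]])
  then have "T - lam_ext e T \<infinity> *\<^sub>R id_blinfun = K" using T(1) by simp
  with T(2,3) show "compact_op (T - lam_ext e T \<infinity> *\<^sub>R id_blinfun)"
    "diagonal_op e (T - lam_ext e T \<infinity> *\<^sub>R id_blinfun)" by simp_all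
qed

lemma diag_alg_apply: "T \<in> diag_alg e \<Longrightarrow> T (e i) = lam e T i *\<^sub>R e i"
proof -
  assume "T \<in> diag_alg e"
  then obtain c K where T: "T = c *\<^sub>R id_blinfun + K" "diagonal_op e K" by (rule diag_algE)
  then have "T (e i) = (c + lam e K i) *\<^sub>R e i"
    by (simp add: blinfun.add_left scaleR_blinfun.rep_eq diagonal_op_apply scaleR_add_left)
  moreover from this have "lam e T i = c + lam e K i" by (rule lam_eqI)
  ultimately show ?thesis by simp
qed

lemma diag_alg_add: "S \<in> diag_alg e \<Longrightarrow> T \<in> diag_alg e \<Longrightarrow> S + T \<in> diag_alg e"
proof -
  assume "S \<in> diag_alg e" "T \<in> diag_alg e"
  then obtain a K b L where S: "S = a *\<^sub>R id_blinfun + K" "compact_op K" "diagonal_op e K"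
    and T: "T = b *\<^sub>R id_blinfun + L" "compact_op L" "diagonal_op e L" by (metis diag_algE)
  have "S + T = (a + b) *\<^sub>R id_blinfun + (K + L)" using S T by (simp add: algebra_simps)
  then show ?thesis using diag_algI[OF compact_op_add[OF S(2) T(2)] diagonal_op_add[OF S(3) T(3)]] by simp
qed

lemma diag_alg_scaleR: "T \<in> diag_alg e \<Longrightarrow> c *\<^sub>R T \<in> diag_alg e"
proof -
  assume "T \<in> diag_alg e"
  then obtain b L where T: "T = b *\<^sub>R id_blinfun + L" "compact_op L" "diagonal_op e L" by (rule diag_algE)
  have "c *\<^sub>R T = (c * b) *\<^sub>R id_blinfun + c *\<^sub>R L" using T by (simp add: algebra_simps)
  then show ?thesis using diag_algI[OF compact_op_scaleR[OF T(2)] diagonal_op_scaleR[OF T(3)]] by simp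
qed

lemma diag_alg_compose: "S \<in> diag_alg e \<Longrightarrow> T \<in> diag_alg e \<Longrightarrow> S o\<^sub>L T \<in> diag_alg e"
proof -
  assume "S \<in> diag_alg e" "T \<in> diag_alg e"
  then obtain a K b L where S: "S = a *\<^sub>R id_blinfun + K" "compact_op K" "diagonal_op e K"
    and T: "T = b *\<^sub>R id_blinfun + L" "compact_op L" "diagonal_op e L" by (metis diag_algE)
  have "S o\<^sub>L T = (a * b) *\<^sub>R id_blinfun + (a *\<^sub>R L + b *\<^sub>R K + (K o\<^sub>L L))"
    unfolding S(1) T(1) by (rule blinfun_eqI)
      (simp add: blinfun.add_left blinfun.add_right scaleR_blinfun.rep_eq blinfun.scaleR_right algebra_simps)
  moreover have "compact_op (a *\<^sub>R L + b *\<^sub>R K + (K o\<^sub>L L))"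
    by (intro compact_op_add compact_op_scaleR compact_op_compose_left S T)
  moreover have "diagonal_op e (a *\<^sub>R L + b *\<^sub>R K + (K o\<^sub>L L))"
    by (intro diagonal_op_add diagonal_op_scaleR diagonal_op_compose S T)
  ultimately show ?thesis by (simp add: diag_algI)
qed

lemma subspace_diag_alg: "subspace (diag_alg e)"
proof -
  have "0 \<in> diag_alg e" using diag_algI[OF compact_op_0 diagonal_op_0, of 0] by simp
  then show ?thesis unfolding subspace_def using diag_alg_add diag_alg_scaleR by blast
qed

lemma lam_compose: "S \<in> diag_alg e \<Longrightarrow> T \<in> diag_alg e \<Longrightarrow> lam e (S o\<^sub>L T) i = lam e S i * lam e T i"
  by (rule lam_eqI) (simp add: diag_alg_apply blinfun.scaleR_right)

lemma lam_ext_add: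
  "S \<in> diag_alg e \<Longrightarrow> T \<in> diag_alg e \<Longrightarrow> lam_ext e (S + T) k = lam_ext e S k + lam_ext e T k"
proof (cases k)
  case infinity
  assume "S \<in> diag_alg e" "T \<in> diag_alg e"
  then have "lam e (S + T) \<longlonglongrightarrow> lam_ext e S \<infinity> + lam_ext e T \<infinity>"
    unfolding lam_add[abs_def] by (intro tendsto_add lam_tendsto_lam_ext)
  then show ?thesis using infinity by (simp add: lam_ext_infinity_eqI)
qed (simp add: lam_ext_def lam_add)

lemma lam_ext_scaleR: "T \<in> diag_alg e \<Longrightarrow> lam_ext e (c *\<^sub>R T) k = c * lam_ext e T k"
proof (cases k)
  case infinity
  assume "T \<in> diag_alg e"
  then have "lam e (c *\<^sub>R T) \<longlonglongrightarrow> c * lam_ext e T \<infinity>"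
    unfolding lam_scaleR[abs_def] by (intro tendsto_mult tendsto_const lam_tendsto_lam_ext)
  then show ?thesis using infinity by (simp add: lam_ext_infinity_eqI)
qed (simp add: lam_ext_def lam_scaleR)

lemma lam_ext_compose:
  "S \<in> diag_alg e \<Longrightarrow> T \<in> diag_alg e \<Longrightarrow> lam_ext e (S o\<^sub>L T) k = lam_ext e S k * lam_ext e T k"
proof (cases k)
  case infinity
  assume "S \<in> diag_alg e" "T \<in> diag_alg e"
  then have "(\<lambda>i. lam e S i * lam e T i) \<longlonglongrightarrow> lam_ext e S \<infinity> * lam_ext e T \<infinity>"
    by (intro tendsto_mult lam_tendsto_lam_ext)
  moreover have "lam e (S o\<^sub>L T) = (\<lambda>i. lam e S i * lam e T i)"
    using \<open>S \<in> diag_alg e\<close> \<open>T \<in> diag_alg e\<close> by (simp add: lam_compose fun_eq_iff)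
  ultimately show ?thesis using infinity by (simp add: lam_ext_infinity_eqI)
qed (simp add: lam_ext_def lam_compose)

lemma lam_ext_lipschitz:
  obtains C where "C > 0"
    "\<And>S T k. S \<in> diag_alg e \<Longrightarrow> T \<in> diag_alg e \<Longrightarrow> \<bar>lam_ext e S k - lam_ext e T k\<bar> \<le> C * norm (S - T)"
proof -
  obtain C where C: "C > 0" "\<And>S T i. \<bar>lam e S i - lam e T i\<bar> \<le> C * norm (S - T)"
    using lam_lipschitz by blast
  have "\<bar>lam_ext e S k - lam_ext e T k\<bar> \<le> C * norm (S - T)"
    if "S \<in> diag_alg e" "T \<in> diag_alg e" for S T k
  proof (cases k)
    case infinity
    have "(\<lambda>i. \<bar>lam e S i - lam e T i\<bar>) \<longlonglongrightarrow> \<bar>lam_ext e S \<infinity> - lam_ext e T \<infinity>\<bar>"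
      using that by (intro tendsto_rabs tendsto_diff lam_tendsto_lam_ext)
    then show ?thesis using infinity C(2) by (intro tendsto_upperbound always_eventually) auto
  qed (simp add: lam_ext_def C(2))
  with C(1) show ?thesis by (rule that)
qed

lemma closed_diag_alg: "closed (diag_alg e)"
proof (rule closed_sequential_limits[THEN iffD2], intro allI impI, elim conjE)
  fix T' T assume alg: "\<forall>n. T' n \<in> diag_alg e" and lim: "T' \<longlonglongrightarrow> T"
  obtain C where C: "C > 0"
    "\<And>S T k. S \<in> diag_alg e \<Longrightarrow> T \<in> diag_alg e \<Longrightarrow> \<bar>lam_ext e S k - lam_ext e T k\<bar> \<le> C * norm (S - T)"
    using lam_ext_lipschitz by blast
  define c where "c n = lam_ext e (T' n) \<infinity>" for n
  have "Cauchy c"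
  proof (rule metric_CauchyI)
    fix \<epsilon> :: real assume "\<epsilon> > 0"
    obtain M where M: "\<forall>m\<ge>M. \<forall>n\<ge>M. dist (T' m) (T' n) < \<epsilon> / C"
      using LIMSEQ_imp_Cauchy[OF lim] \<open>\<epsilon> > 0\<close> C(1) unfolding Cauchy_def by (meson divide_pos_pos)
    have "dist (c m) (c n) < \<epsilon>" if "m \<ge> M" "n \<ge> M" for m n
    proof -
      have "dist (c m) (c n) \<le> C * norm (T' m - T' n)"
        unfolding c_def dist_real_def using alg by (intro C(2)) auto
      also have "\<dots> < \<epsilon>" using M that C(1) by (simp add: dist_norm field_simps)
      finally show ?thesis .
    qed
    then show "\<exists>M. \<forall>m\<ge>M. \<forall>n\<ge>M. dist (c m) (c n) < \<epsilon>" by blast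
  qed
  then obtain c0 where c0: "c \<longlonglongrightarrow> c0" by (auto simp: Cauchy_convergent_iff convergent_def)
  define K where "K = T - c0 *\<^sub>R id_blinfun"
  have K': "(\<lambda>n. T' n - c n *\<^sub>R id_blinfun) \<longlonglongrightarrow> K"
    unfolding K_def by (intro tendsto_diff lim tendsto_scaleR c0 tendsto_const)
  have "compact_op K" "diagonal_op e K"
    using compact_op_limit[OF K'] diagonal_op_limit[OF K'] diag_alg_minus_lam_ext alg
    unfolding c_def by blast+
  then have "c0 *\<^sub>R id_blinfun + K \<in> diag_alg e" by (rule diag_algI)
  then show "T \<in> diag_alg e" by (simp add: K_def)
qed

subsection \<open>Closed ideals\<close>

lemma closed_ideal_A_L: "closed_ideal_of (diag_alg e) (A_L e L)"
  unfolding closed_ideal_of_def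
proof (intro conjI ballI)
  show "A_L e L \<subseteq> diag_alg e" unfolding A_L_def by blast
  show "subspace (A_L e L)"
    unfolding subspace_def A_L_def
  proof (intro conjI ballI allI)
    show "0 \<in> {T \<in> diag_alg e. \<forall>k\<in>L. lam_ext e T k = 0}"
      using subspace_0[OF subspace_diag_alg] lam_ext_scaleR[of 0 0] by simp
  qed (auto simp: diag_alg_add diag_alg_scaleR lam_ext_add lam_ext_scaleR)
  show "closed (A_L e L)"
  proof (rule closed_sequential_limits[THEN iffD2], intro allI impI, elim conjE)
    fix T' T assume A: "\<forall>n. T' n \<in> A_L e L" and lim: "T' \<longlonglongrightarrow> T"
    obtain C where C: "C > 0"
      "\<And>S T k. S \<in> diag_alg e \<Longrightarrow> T \<in> diag_alg e \<Longrightarrow> \<bar>lam_ext e S k - lam_ext e T k\<bar> \<le> C * norm (S - T)"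
      using lam_ext_lipschitz by blast
    have alg: "T \<in> diag_alg e"
      using closed_diag_alg[unfolded closed_sequential_limits] A lim unfolding A_L_def by blast
    have "lam_ext e T k = 0" if "k \<in> L" for k
    proof -
      have "\<bar>lam_ext e T k\<bar> \<le> C * norm (T - T' n)" for n
        using C(2)[OF alg, of "T' n" k] A that unfolding A_L_def by auto
      moreover have "(\<lambda>n. C * norm (T - T' n)) \<longlonglongrightarrow> C * norm (T - T)"
        by (intro tendsto_mult tendsto_const tendsto_norm tendsto_diff lim)
      ultimately have "\<bar>lam_ext e T k\<bar> \<le> 0" by (intro LIMSEQ_le_const) auto
      then show ?thesis by simp
    qed
    with alg show "T \<in> A_L e L" unfolding A_L_def by blast
  qed
  fix S T assume "S \<in> diag_alg e" "T \<in> A_L e L"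
  then show "S o\<^sub>L T \<in> A_L e L" "T o\<^sub>L S \<in> A_L e L"
    unfolding A_L_def by (auto simp: diag_alg_compose lam_ext_compose)
qed

lemma coord_proj_in_diag_alg: "coord_proj e i \<in> diag_alg e"
proof -
  have D: "diagonal_op e (coord_proj e i)"
    by (rule diagonal_opI[where d = "\<lambda>j. if j = i then 1 else 0"]) (simp add: coord_basis)
  show ?thesis using diag_algI[OF compact_op_coord_proj D, of 0] by simp
qed

lemma coord_proj_compose: "S \<in> diag_alg e \<Longrightarrow> coord_proj e i o\<^sub>L S = lam e S i *\<^sub>R coord_proj e i"
  by (rule blinfun_eqI) (simp add: scaleR_blinfun.rep_eq coord_apply_diagonal[OF diag_alg_apply])

lemma coord_proj_mem_ideal:
  assumes J: "closed_ideal_of (diag_alg e) J" and "T \<in> J" "lam e T i \<noteq> 0"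
  shows "coord_proj e i \<in> J"
proof -
  have "T \<in> diag_alg e" "subspace J" using J \<open>T \<in> J\<close> unfolding closed_ideal_of_def by auto
  have "coord_proj e i o\<^sub>L T \<in> J" using J coord_proj_in_diag_alg \<open>T \<in> J\<close> unfolding closed_ideal_of_def by blast
  then have "inverse (lam e T i) *\<^sub>R (coord_proj e i o\<^sub>L T) \<in> J" by (rule subspace_scale[OF \<open>subspace J\<close>])
  then show ?thesis using \<open>lam e T i \<noteq> 0\<close> by (simp add: coord_proj_compose[OF \<open>T \<in> diag_alg e\<close>])
qed

text \<open>A compact diagonal \<open>K\<close> is the norm limit of \<open>P\<^sub>n K = \<Sum>\<^sub>i\<^sub><\<^sub>n \<lambda>\<^sub>i(K) Q\<^sub>i\<close>, and each
  \<open>Q\<^sub>i\<close> with \<open>\<lambda>\<^sub>i(K) \<noteq> 0\<close> lies in \<open>J\<close>.\<close>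
lemma compact_diagonal_mem_ideal:
  assumes J: "closed_ideal_of (diag_alg e) J" and K: "compact_op K" "diagonal_op e K"
    and zeros: "\<And>i. lam e K i \<noteq> 0 \<Longrightarrow> \<exists>T\<in>J. lam e T i \<noteq> 0"
  shows "K \<in> J"
proof -
  have "subspace J" "closed J" using J unfolding closed_ideal_of_def by auto
  have KA: "K \<in> diag_alg e" using diag_algI[OF K, of 0] by simp
  define P where "P n = (\<Sum>i<n. coord_proj e i)" for n
  have "lam e K i *\<^sub>R coord_proj e i \<in> J" for i
    using zeros[of i] coord_proj_mem_ideal[OF J] subspace_scale[OF \<open>subspace J\<close>] subspace_0[OF \<open>subspace J\<close>]
    by (cases "lam e K i = 0") auto
  moreover have "P n o\<^sub>L K = (\<Sum>i<n. lam e K i *\<^sub>R coord_proj e i)" for n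
    unfolding P_def by (rule blinfun_eqI) (simp add: blinfun.sum_left coord_proj_compose[OF KA, symmetric])
  ultimately have "P n o\<^sub>L K \<in> J" for n by (simp add: subspace_sum[OF \<open>subspace J\<close>])
  moreover have "(\<lambda>n. P n o\<^sub>L K) \<longlonglongrightarrow> K"
  proof -
    obtain C where C: "C > 0" "\<And>n x. norm (basis_proj e n x) \<le> C * norm x"
      using basis_proj_bound by blast
    have "norm (P n) \<le> C" for n
      unfolding P_def using C by (intro norm_blinfun_bound) (simp_all add: sum_coord_proj_apply)
    then show ?thesis
      using K(1) basis_proj_tendsto by (intro compose_compact_op_tendsto) (simp_all add: P_def sum_coord_proj_apply)
  qed
  ultimately show ?thesis using closed_sequentially[OF \<open>closed J\<close>, of "\<lambda>n. P n o\<^sub>L K" K] by blast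
qed

lemma closed_common_zeros:
  assumes "J \<subseteq> diag_alg e"
  shows "closed {k. \<forall>T\<in>J. lam_ext e T k = 0}"
  unfolding closed_def open_enat_iff
proof
  assume "\<infinity> \<in> - {k. \<forall>T\<in>J. lam_ext e T k = 0}"
  then obtain T where T: "T \<in> J" "lam_ext e T \<infinity> \<noteq> 0" by auto
  then have "\<forall>\<^sub>F i in sequentially. lam e T i \<noteq> 0"
    using assms by (intro tendsto_imp_eventually_ne[OF lam_tendsto_lam_ext]) auto
  then obtain N where N: "\<And>i. i \<ge> N \<Longrightarrow> lam e T i \<noteq> 0" unfolding eventually_sequentially by blast
  have "lam_ext e T k \<noteq> 0" if "k > enat N" for k
    using that T(2) N by (cases k) (auto simp: lam_ext_def)
  with T(1) show "\<exists>n::nat. {enat n <..} \<subseteq> - {k. \<forall>T\<in>J. lam_ext e T k = 0}" by blast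
qed

lemma mem_ideal_of_lam_ext_vanishing:
  assumes J: "closed_ideal_of (diag_alg e) J" and TA: "T \<in> diag_alg e"
    and T0: "\<And>k. \<forall>S\<in>J. lam_ext e S k = 0 \<Longrightarrow> lam_ext e T k = 0"
  shows "T \<in> J"
proof -
  have JA: "J \<subseteq> diag_alg e" and "subspace J" using J unfolding closed_ideal_of_def by auto
  txt \<open>Pick \<open>S \<in> J\<close> with \<open>\<lambda>\<^sub>\<omega>(S) \<noteq> 0\<close> if \<open>\<lambda>\<^sub>\<omega>(T) \<noteq> 0\<close> (and \<open>S = 0\<close> otherwise); then
    \<open>W = T - (\<lambda>\<^sub>\<omega>(T) / \<lambda>\<^sub>\<omega>(S)) S\<close> is compact diagonal and vanishes wherever \<open>J\<close> does.\<close>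
  obtain S where S: "S \<in> J" "lam_ext e T \<infinity> \<noteq> 0 \<Longrightarrow> lam_ext e S \<infinity> \<noteq> 0"
    using T0[of \<infinity>] subspace_0[OF \<open>subspace J\<close>] by blast
  define c where "c = lam_ext e T \<infinity> / lam_ext e S \<infinity>"
  define W where "W = T - c *\<^sub>R S"
  have SA: "S \<in> diag_alg e" using S JA by blast
  have WA: "W \<in> diag_alg e" using TA SA subspace_diag_alg unfolding W_def by (simp add: subspace_diff subspace_scale)
  have "lam_ext e (T + (- c) *\<^sub>R S) \<infinity> = lam_ext e T \<infinity> + (- c) * lam_ext e S \<infinity>"
    unfolding lam_ext_add[OF TA diag_alg_scaleR[OF SA]] lam_ext_scaleR[OF SA] ..
  then have "lam_ext e W \<infinity> = lam_ext e T \<infinity> + (- c) * lam_ext e S \<infinity>" by (simp add: W_def)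
  also have "\<dots> = 0" using S(2) by (cases "lam_ext e T \<infinity> = 0") (simp_all add: c_def)
  finally have "lam_ext e W \<infinity> = 0" .
  then have "compact_op W" "diagonal_op e W" using diag_alg_minus_lam_ext[OF WA] by simp_all
  moreover have "\<exists>R\<in>J. lam e R i \<noteq> 0" if "lam e W i \<noteq> 0" for i
  proof (rule ccontr)
    assume "\<not> (\<exists>R\<in>J. lam e R i \<noteq> 0)"
    then have "lam e T i = 0" "lam e S i = 0" using T0[of "enat i"] S(1) by (auto simp: lam_ext_def)
    then show False using that by (simp add: W_def lam_diff lam_scaleR)
  qed
  ultimately have "W \<in> J" by (rule compact_diagonal_mem_ideal[OF J])
  then have "W + c *\<^sub>R S \<in> J" using S(1) \<open>subspace J\<close> by (simp add: subspace_add subspace_scale)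
  then show "T \<in> J" by (simp add: W_def)
qed

lemma closed_ideal_eq_A_L:
  assumes J: "closed_ideal_of (diag_alg e) J"
  shows "J = A_L e {k. \<forall>T\<in>J. lam_ext e T k = 0}"
proof
  show "J \<subseteq> A_L e {k. \<forall>T\<in>J. lam_ext e T k = 0}"
    using J unfolding A_L_def closed_ideal_of_def by blast
  show "A_L e {k. \<forall>T\<in>J. lam_ext e T k = 0} \<subseteq> J"
    unfolding A_L_def by (auto intro: mem_ideal_of_lam_ext_vanishing[OF J])
qed

end

theorem proposition1p1:
  fixes e :: "nat \<Rightarrow> 'a::banach"
  assumes "schauder_basis e"
  shows "(\<forall>T\<in>diag_alg e. convergent (lam e T)) \<and>
         (\<forall>J. closed_ideal_of (diag_alg e) J \<longleftrightarrow> (\<exists>L::enat set. closed L \<and> J = A_L e L))"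
proof -
  interpret schauder e by unfold_locales (rule assms)
  show ?thesis
  proof (intro conjI ballI allI iffI)
    fix T assume "T \<in> diag_alg e"
    then show "convergent (lam e T)" by (rule convergentI[OF lam_tendsto_lam_ext])
  next
    fix J assume J: "closed_ideal_of (diag_alg e) J"
    then have "closed {k. \<forall>T\<in>J. lam_ext e T k = 0}"
      by (intro closed_common_zeros) (simp add: closed_ideal_of_def)
    with closed_ideal_eq_A_L[OF J] show "\<exists>L. closed L \<and> J = A_L e L" by blast
  next
    fix J assume "\<exists>L::enat set. closed L \<and> J = A_L e L"
    then obtain L where "J = A_L e L" by blast
    then show "closed_ideal_of (diag_alg e) J" by (simp add: closed_ideal_A_L)
  qed
qed

end
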